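(* Let $X=[a,b]\subseteq\mathbb{R}$ with $a<b$ and let $\mathcal{U}$ be the set of all continuous preferences on $[a,b]$ with a unique top. (i) A median voter scheme $f^\alpha:\mathcal{U}^n\to[a,b]$ with fixed ballots $\alpha_1\le\dots\le\alpha_{n-1}$ in $[a,b]$ is NOM if and only if $\alpha_1=a$ and $\alpha_{n-1}=b$. (ii) A non-dictatorial generalized median voter scheme $f^p:\mathcal{U}^n\to[a,b]$ is NOM if and only if $p_{N\setminus\{i\}}=a$ and $p_{\{i\}}=b$ for each $i\in N$.
   Context: $N=\{1,\dots,n\}$, $n\ge2$. A preference in $\mathcal{U}$ is a continuous complete and transitive binary relation $R_i$ on $[a,b]$ (indifferences between non-top alternatives allowed) with a unique best element $t(R_i)$; $P_i$ denotes its strict part. Median voter scheme: $f^\alpha(R)=\mathrm{med}\{t(R_1),\dots,t(R_n),\alpha_1,\dots,\alpha_{n-1}\}$. A monotonic family of fixed ballots is $p=\{p_S\}_{S\subseteq N}$ with $p_S\in[a,b]$, $p_N=a$, $p_\emptyset=b$, and $p_Q\le p_T$ whenever $T\subseteq Q$; the generalized median voter scheme is $f^p(R)=\min_{S\subseteq N}\max_{j\in S}\{t(R_j),p_S\}$. A rule is dictatorial if there is $i$ with $f(R)=t(R_i)$ for all $R$. Option set $O(R_i)=\{f(R_i,R_{-i}):R_{-i}\in\mathcal{U}^{n-1}\}$ (for these rules a closed interval). For a nonempty compact $Y$, let $B(R_i,Y)$ and $W(R_i,Y)$ denote an $R_i$-best and an $R_i$-worst element of $Y$. $R_i'$ is a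 manipulation at $R_i$ if $f(R_i',R_{-i})\,P_i\,f(R_i,R_{-i})$ for some $R_{-i}$; it is obvious if $W(R_i,O(R_i'))\,P_i\,W(R_i,O(R_i))$ or $B(R_i,O(R_i'))\,P_i\,B(R_i,O(R_i))$. The rule is NOM if it admits no obvious manipulation. *)

theory Defs
  imports "HOL-Analysis.Analysis"
begin

type_synonym pref = "real \<Rightarrow> real \<Rightarrow> bool"   (* R x y : x is weakly preferred to y *)
type_synonym profile = "nat \<Rightarrow> pref"            (* agents 1..n *)

definition strict :: "pref \<Rightarrow> real \<Rightarrow> real \<Rightarrow> bool" where
  "strict R x y \<longleftrightarrow> R x y \<and> \<not> R y x"

definition is_best_in :: "pref \<Rightarrow> real set \<Rightarrow> real \<Rightarrow> bool" where
  "is_best_in R Y y \<longleftrightarrow> y \<in> Y \<and> (\<forall>z\<in>Y. R y z)"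

definition is_worst_in :: "pref \<Rightarrow> real set \<Rightarrow> real \<Rightarrow> bool" where
  "is_worst_in R Y y \<longleftrightarrow> y \<in> Y \<and> (\<forall>z\<in>Y. R z y)"

definition in_U :: "real \<Rightarrow> real \<Rightarrow> pref \<Rightarrow> bool" where
  "in_U a b R \<longleftrightarrow>
     (\<forall>x y. R x y \<longrightarrow> x \<in> {a..b} \<and> y \<in> {a..b}) \<and>
     (\<forall>x\<in>{a..b}. \<forall>y\<in>{a..b}. R x y \<or> R y x) \<and>
     (\<forall>x\<in>{a..b}. \<forall>y\<in>{a..b}. \<forall>z\<in>{a..b}. R x y \<longrightarrow> R y z \<longrightarrow> R x z) \<and>
     (\<forall>x\<in>{a..b}. closed {y \<in> {a..b}. R y x} \<and> closed {y \<in> {a..b}. R x y}) \<and>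
     (\<exists>!t. is_best_in R {a..b} t)"

definition top :: "real \<Rightarrow> real \<Rightarrow> pref \<Rightarrow> real" where
  "top a b R = (THE t. is_best_in R {a..b} t)"

definition is_profile :: "real \<Rightarrow> real \<Rightarrow> nat \<Rightarrow> profile \<Rightarrow> bool" where
  "is_profile a b n R \<longleftrightarrow> (\<forall>i\<in>{1..n}. in_U a b (R i))"

definition med :: "real list \<Rightarrow> real" where
  "med xs = sort xs ! (length xs div 2)"

definition mvs :: "real \<Rightarrow> real \<Rightarrow> nat \<Rightarrow> (nat \<Rightarrow> real) \<Rightarrow> profile \<Rightarrow> real" where
  "mvs a b n \<alpha> R = med (map (\<lambda>i. top a b (R i)) [1..<n+1] @ map \<alpha> [1..<n])"

definition ballots_ok :: "real \<Rightarrow> real \<Rightarrow> nat \<Rightarrow> (nat \<Rightarrow> real) \<Rightarrow> bool" where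
  "ballots_ok a b n \<alpha> \<longleftrightarrow> (\<forall>k\<in>{1..<n}. \<alpha> k \<in> {a..b}) \<and>
      (\<forall>k\<in>{1..<n}. \<forall>l\<in>{1..<n}. k \<le> l \<longrightarrow> \<alpha> k \<le> \<alpha> l)"

definition monotone_family :: "real \<Rightarrow> real \<Rightarrow> nat \<Rightarrow> (nat set \<Rightarrow> real) \<Rightarrow> bool" where
  "monotone_family a b n p \<longleftrightarrow>
     (\<forall>S. S \<subseteq> {1..n} \<longrightarrow> p S \<in> {a..b}) \<and> p {1..n} = a \<and> p {} = b \<and>
     (\<forall>Q T. Q \<subseteq> {1..n} \<longrightarrow> T \<subseteq> Q \<longrightarrow> p Q \<le> p T)"

definition gmvs :: "real \<Rightarrow> real \<Rightarrow> nat \<Rightarrow> (nat set \<Rightarrow> real) \<Rightarrow> profile \<Rightarrow> real" where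
  "gmvs a b n p R = Min {Max (insert (p S) ((\<lambda>j. top a b (R j)) ` S)) | S. S \<subseteq> {1..n}}"

definition dictatorial :: "real \<Rightarrow> real \<Rightarrow> nat \<Rightarrow> (profile \<Rightarrow> real) \<Rightarrow> bool" where
  "dictatorial a b n f \<longleftrightarrow>
     (\<exists>i\<in>{1..n}. \<forall>R. is_profile a b n R \<longrightarrow> f R = top a b (R i))"

definition option_set :: "real \<Rightarrow> real \<Rightarrow> nat \<Rightarrow> (profile \<Rightarrow> real) \<Rightarrow> nat \<Rightarrow> pref \<Rightarrow> real set" where
  "option_set a b n f i Ri = {f (R(i := Ri)) | R. is_profile a b n R}"

definition manipulation :: "real \<Rightarrow> real \<Rightarrow> nat \<Rightarrow> (profile \<Rightarrow> real) \<Rightarrow> nat \<Rightarrow> pref \<Rightarrow> pref \<Rightarrow> bool" where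
  "manipulation a b n f i Ri Ri' \<longleftrightarrow>
     (\<exists>R. is_profile a b n R \<and> strict Ri (f (R(i := Ri'))) (f (R(i := Ri))))"

definition obvious_manipulation :: "real \<Rightarrow> real \<Rightarrow> nat \<Rightarrow> (profile \<Rightarrow> real) \<Rightarrow> nat \<Rightarrow> pref \<Rightarrow> pref \<Rightarrow> bool" where
  "obvious_manipulation a b n f i Ri Ri' \<longleftrightarrow>
     manipulation a b n f i Ri Ri' \<and>
     ((\<exists>w' w. is_worst_in Ri (option_set a b n f i Ri') w' \<and>
              is_worst_in Ri (option_set a b n f i Ri) w \<and> strict Ri w' w) \<or>
      (\<exists>v' v. is_best_in Ri (option_set a b n f i Ri') v' \<and>
              is_best_in Ri (option_set a b n f i Ri) v \<and> strict Ri v' v))"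

definition NOM :: "real \<Rightarrow> real \<Rightarrow> nat \<Rightarrow> (profile \<Rightarrow> real) \<Rightarrow> bool" where
  "NOM a b n f \<longleftrightarrow>
     \<not> (\<exists>i\<in>{1..n}. \<exists>Ri Ri'. in_U a b Ri \<and> in_U a b Ri' \<and> obvious_manipulation a b n f i Ri Ri')"

end

theory Submission
  imports Defs
begin

(* Both kinds of rule are monotone functions of the reported tops, and what agent i can achieve is
   governed by two phantoms, c_i = p_{N-{i}} and d_i = p_{{i}} (alpha_1 and alpha_{n-1} for a median
   voter scheme): if all others report y, an agent with top x obtains
   min (max y c_i) (min (max x y) (max x d_i)), and by monotonicity her option set lies between the
   values at y = a and y = b.
   If c_i = a and d_i = b, every option set is [a,b], so no misreport changes the best or worst option;
   if c_i = b and d_i = a, agent i is a dictator. Otherwise both phantoms lie above a (or both below b).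
   Give agent i the top a and a preference whose bottom is a point m below both phantoms. When all
   others report m she obtains m, the worst outcome there is; reporting c_i she obtains c_i, and then
   every possible outcome is at least c_i, which she prefers to m: a worst-case improvement.
   A median voter scheme is the generalized one with p_S = alpha_{n-|S|}, since both are characterised
   by: f t <= v iff p {j. t j <= v} <= v. *)

section \<open>Preferences given by utilities\<close>

definition utility_pref :: "real \<Rightarrow> real \<Rightarrow> (real \<Rightarrow> real) \<Rightarrow> pref" where
  "utility_pref a b u = (\<lambda>x y. x \<in> {a..b} \<and> y \<in> {a..b} \<and> u y \<le> u x)"

lemma utility_pref_in_U:
  assumes u: "continuous_on {a..b} u" and t: "t \<in> {a..b}"
    and max: "\<And>x. x \<in> {a..b} \<Longrightarrow> x \<noteq> t \<Longrightarrow> u x < u t"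
  shows "in_U a b (utility_pref a b u)" and "top a b (utility_pref a b u) = t"
proof -
  have best: "is_best_in (utility_pref a b u) {a..b} s \<longleftrightarrow> s = t" for s
    using t max by (force simp: is_best_in_def utility_pref_def)
  have "closed ({a..b} \<inter> u -` {u x..})" "closed ({a..b} \<inter> u -` {..u x})" for x
    by (intro continuous_closed_preimage u closed_atLeastAtMost closed_atLeast closed_atMost)+
  moreover have "{y \<in> {a..b}. utility_pref a b u y x} = {a..b} \<inter> u -` {u x..}"
    and "{y \<in> {a..b}. utility_pref a b u x y} = {a..b} \<inter> u -` {..u x}" if "x \<in> {a..b}" for x
    using that by (auto simp: utility_pref_def)
  ultimately have closed: "\<forall>x\<in>{a..b}. closed {y \<in> {a..b}. utility_pref a b u y x} \<and>
      closed {y \<in> {a..b}. utility_pref a b u x y}"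
    by simp
  show "in_U a b (utility_pref a b u)"
    unfolding in_U_def
  proof (intro conjI)
    show "\<exists>!t. is_best_in (utility_pref a b u) {a..b} t"
      by (simp add: best)
  qed (fact closed | simp add: utility_pref_def | force simp: utility_pref_def)+
  show "top a b (utility_pref a b u) = t"
    unfolding top_def by (rule the_equality) (simp_all add: best)
qed

lemma top_in_U:
  assumes "in_U a b R"
  shows "top a b R \<in> {a..b}"
proof -
  have "\<exists>!t. is_best_in R {a..b} t"
    using assms unfolding in_U_def by blast
  then have "is_best_in R {a..b} (top a b R)"
    unfolding top_def by (rule theI')
  then show ?thesis
    unfolding is_best_in_def by simp
qed

definition single_peaked_pref :: "real \<Rightarrow> real \<Rightarrow> real \<Rightarrow> pref" where
  "single_peaked_pref a b t = utility_pref a b (\<lambda>x. - \<bar>x - t\<bar>)"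

lemma single_peaked_pref_in_U:
  assumes "t \<in> {a..b}"
  shows "in_U a b (single_peaked_pref a b t)" and "top a b (single_peaked_pref a b t) = t"
proof -
  have "continuous_on {a..b} (\<lambda>x. - \<bar>x - t\<bar>)"
    by (intro continuous_intros)
  then show "in_U a b (single_peaked_pref a b t)" "top a b (single_peaked_pref a b t) = t"
    unfolding single_peaked_pref_def using utility_pref_in_U[OF _ assms] by auto
qed

lemma is_profile_single_peaked:
  "y \<in> {a..b} \<Longrightarrow> is_profile a b n (\<lambda>j. single_peaked_pref a b y)"
  unfolding is_profile_def using single_peaked_pref_in_U by simp

definition valley :: "real \<Rightarrow> real \<Rightarrow> real \<Rightarrow> real \<Rightarrow> real" where
  "valley l r m x = max (l * (m - x)) (r * (x - m))"

lemma valley_left: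
  assumes "0 \<le> l" "0 \<le> r" "x \<le> m"
  shows "valley l r m x = l * (m - x)"
proof -
  have "r * (x - m) \<le> 0" "0 \<le> l * (m - x)"
    using assms by (simp_all add: mult_nonneg_nonpos)
  then show ?thesis unfolding valley_def by simp
qed

lemma valley_right:
  assumes "0 \<le> l" "0 \<le> r" "m \<le> x"
  shows "valley l r m x = r * (x - m)"
proof -
  have "l * (m - x) \<le> 0" "0 \<le> r * (x - m)"
    using assms by (simp_all add: mult_nonneg_nonpos)
  then show ?thesis unfolding valley_def by simp
qed

lemma valley_mono:
  assumes "0 \<le> l" "0 \<le> r" "m \<le> z \<and> z \<le> z' \<or> z' \<le> z \<and> z \<le> m"
  shows "valley l r m z \<le> valley l r m z'"
  using assms by (auto simp: valley_left valley_right mult_left_mono)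

lemma valley_nonneg: "0 \<le> l \<Longrightarrow> 0 \<le> r \<Longrightarrow> 0 \<le> valley l r m x"
  by (cases "x \<le> m") (simp_all add: valley_left valley_right)

lemma valley_pos: "0 < l \<Longrightarrow> 0 < r \<Longrightarrow> x \<noteq> m \<Longrightarrow> 0 < valley l r m x"
  unfolding valley_def by (cases "x < m") (auto simp: less_max_iff_disj)

lemma valley_less_endpoint:
  assumes "0 < l" "0 < r" "a < x" "x < b"
  shows "valley l r m x < max (valley l r m a) (valley l r m b)"
proof (cases "x \<le> m")
  case True
  then have "valley l r m x < valley l r m a"
    using assms by (simp add: valley_left)
  then show ?thesis by simp
next
  case False
  then have "valley l r m x < valley l r m b"
    using assms by (simp add: valley_right)
  then show ?thesis by simp
qed

definition valley_pref :: "real \<Rightarrow> real \<Rightarrow> real \<Rightarrow> real \<Rightarrow> real \<Rightarrow> pref" where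
  "valley_pref a b l r m = utility_pref a b (valley l r m)"

lemma valley_pref_in_U:
  assumes "a \<le> b" "0 < l" "0 < r" "t \<in> {a, b}"
    and other_endpoint: "\<And>s. s \<in> {a, b} \<Longrightarrow> s \<noteq> t \<Longrightarrow> valley l r m s < valley l r m t"
  shows "in_U a b (valley_pref a b l r m)" and "top a b (valley_pref a b l r m) = t"
proof -
  have endpoints: "valley l r m s \<le> valley l r m t" if "s \<in> {a, b}" for s
    using other_endpoint[OF that] by (cases "s = t") auto
  have less: "valley l r m x < valley l r m t" if "x \<in> {a..b}" "x \<noteq> t" for x
  proof (cases "x \<in> {a, b}")
    case True
    then show ?thesis using other_endpoint that(2) by blast
  next
    case False
    with that(1) have "a < x" "x < b" by auto
    then have "valley l r m x < max (valley l r m a) (valley l r m b)"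
      by (rule valley_less_endpoint[OF assms(2,3)])
    also have "\<dots> \<le> valley l r m t"
      using endpoints by simp
    finally show ?thesis .
  qed
  have "continuous_on {a..b} (valley l r m)"
    unfolding valley_def by (intro continuous_intros)
  moreover have "t \<in> {a..b}"
    using assms(1,4) by auto
  ultimately show "in_U a b (valley_pref a b l r m)" "top a b (valley_pref a b l r m) = t"
    unfolding valley_pref_def using utility_pref_in_U less by blast+
qed

lemma valley_pref_bottom:
  assumes "0 < l" "0 < r" "z \<in> {a..b}" "m \<in> {a..b}"
  shows "valley_pref a b l r m z m" and "z \<noteq> m \<Longrightarrow> strict (valley_pref a b l r m) z m"
  using assms valley_pos[OF assms(1,2), of z m] valley_nonneg[of l r m z]
  by (auto simp: valley_pref_def utility_pref_def strict_def valley_def)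

lemma valley_pref_worst_in:
  assumes "0 < l" "0 < r" "m \<in> Y" "Y \<subseteq> {a..b}"
  shows "is_worst_in (valley_pref a b l r m) Y m"
  using assms valley_pref_bottom(1)[OF assms(1,2)] unfolding is_worst_in_def by blast

lemma valley_pref_mono:
  assumes "0 \<le> l" "0 \<le> r" "z \<in> {a..b}" "z' \<in> {a..b}"
    and "m \<le> z \<and> z \<le> z' \<or> z' \<le> z \<and> z \<le> m"
  shows "valley_pref a b l r m z' z"
  using assms valley_mono[OF assms(1,2,5)] by (simp add: valley_pref_def utility_pref_def)

section \<open>Rules governed by two phantoms per agent\<close>

lemma outcome_in_option_set:
  "is_profile a b n R \<Longrightarrow> f (R(i := Ri)) \<in> option_set a b n f i Ri"
  unfolding option_set_def by blast

lemma obvious_manipulation_by_worst_outcomes: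
  assumes "is_profile a b n R"
    and "is_worst_in Ri (option_set a b n f i Ri) (f (R(i := Ri)))"
    and "is_worst_in Ri (option_set a b n f i Ri') (f (R(i := Ri')))"
    and "strict Ri (f (R(i := Ri'))) (f (R(i := Ri)))"
  shows "obvious_manipulation a b n f i Ri Ri'"
  unfolding obvious_manipulation_def manipulation_def using assms by blast

lemma NOM_if_option_sets_independent:
  assumes "\<And>i Ri. i \<in> {1..n} \<Longrightarrow> in_U a b Ri \<Longrightarrow> option_set a b n f i Ri = Y i"
  shows "NOM a b n f"
  unfolding NOM_def obvious_manipulation_def
  using assms by (auto simp: is_worst_in_def is_best_in_def strict_def)

definition rest_value :: "real \<Rightarrow> real \<Rightarrow> real \<Rightarrow> real \<Rightarrow> real" where
  "rest_value c d x y = min (max y c) (min (max x y) (max x d))"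

lemma rest_value_between: "min x y \<le> rest_value c d x y" "rest_value c d x y \<le> max x y"
  unfolding rest_value_def by auto

locale phantom_rule =
  fixes a b :: real and n :: nat and F :: "(nat \<Rightarrow> real) \<Rightarrow> real" and c d :: "nat \<Rightarrow> real"
  assumes a_less_b: "a < b"
    and F_mono: "\<And>s t. (\<And>j. j \<in> {1..n} \<Longrightarrow> a \<le> s j \<and> s j \<le> t j \<and> t j \<le> b) \<Longrightarrow> F s \<le> F t"
    and F_against_unanimous: "\<And>i x y. i \<in> {1..n} \<Longrightarrow> x \<in> {a..b} \<Longrightarrow> y \<in> {a..b} \<Longrightarrow>
      F ((\<lambda>j. y)(i := x)) = rest_value (c i) (d i) x y"
    and phantoms_range: "\<And>i. i \<in> {1..n} \<Longrightarrow> c i \<in> {a..b} \<and> d i \<in> {a..b}"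
begin

abbreviation rule :: "profile \<Rightarrow> real" where
  "rule R \<equiv> F (\<lambda>j. top a b (R j))"

lemma option_set_subset_rest_values:
  assumes Ri: "in_U a b Ri" and i: "i \<in> {1..n}"
  shows "option_set a b n rule i Ri \<subseteq>
    {rest_value (c i) (d i) (top a b Ri) a .. rest_value (c i) (d i) (top a b Ri) b}"
proof
  fix z assume "z \<in> option_set a b n rule i Ri"
  then obtain R where R: "is_profile a b n R" and z: "z = rule (R(i := Ri))"
    unfolding option_set_def by blast
  have x: "top a b Ri \<in> {a..b}"
    using top_in_U[OF Ri] .
  have tops: "top a b (R j) \<in> {a..b}" if "j \<in> {1..n}" for j
    using R that top_in_U unfolding is_profile_def by blast
  have "F ((\<lambda>j. a)(i := top a b Ri)) \<le> z"
    unfolding z by (rule F_mono) (use x tops in auto)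
  moreover have "z \<le> F ((\<lambda>j. b)(i := top a b Ri))"
    unfolding z by (rule F_mono) (use x tops in auto)
  ultimately show "z \<in> {rest_value (c i) (d i) (top a b Ri) a .. rest_value (c i) (d i) (top a b Ri) b}"
    using F_against_unanimous[OF i x] a_less_b by simp
qed

lemma option_set_subset:
  assumes "in_U a b Ri" "i \<in> {1..n}"
  shows "option_set a b n rule i Ri \<subseteq> {a..b}"
proof -
  have "top a b Ri \<in> {a..b}"
    using top_in_U[OF assms(1)] .
  then have "min (top a b Ri) a = a" "max (top a b Ri) b = b"
    by auto
  then have "a \<le> rest_value (c i) (d i) (top a b Ri) a" "rest_value (c i) (d i) (top a b Ri) b \<le> b"
    using rest_value_between[where x = "top a b Ri" and c = "c i" and d = "d i"] by metis+
  then show ?thesis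
    using option_set_subset_rest_values[OF assms] by fastforce
qed

lemma rule_against_unanimous:
  assumes y: "y \<in> {a..b}" and Ri: "in_U a b Ri" and i: "i \<in> {1..n}"
  shows "rule ((\<lambda>j. single_peaked_pref a b y)(i := Ri)) = rest_value (c i) (d i) (top a b Ri) y"
proof -
  have "(\<lambda>j. top a b (((\<lambda>j. single_peaked_pref a b y)(i := Ri)) j)) = (\<lambda>j. y)(i := top a b Ri)"
    using single_peaked_pref_in_U(2)[OF y] by (simp add: fun_eq_iff)
  then show ?thesis
    using F_against_unanimous[OF i top_in_U[OF Ri] y] by simp
qed

lemma rest_value_in_option_set:
  assumes "y \<in> {a..b}" "in_U a b Ri" "i \<in> {1..n}"
  shows "rest_value (c i) (d i) (top a b Ri) y \<in> option_set a b n rule i Ri"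
  using outcome_in_option_set[OF is_profile_single_peaked[OF assms(1)]] rule_against_unanimous[OF assms]
  by metis

lemma NOM_if_extreme_phantoms:
  assumes "\<forall>i\<in>{1..n}. c i = a \<and> d i = b"
  shows "NOM a b n rule"
proof (rule NOM_if_option_sets_independent)
  fix i Ri assume i: "i \<in> {1..n}" and Ri: "in_U a b Ri"
  have "top a b Ri \<in> {a..b}"
    using top_in_U[OF Ri] .
  then have unanimous: "rest_value (c i) (d i) (top a b Ri) y = y" if "y \<in> {a..b}" for y
    using assms i that by (auto simp: rest_value_def)
  show "option_set a b n rule i Ri = {a..b}"
  proof
    show "option_set a b n rule i Ri \<subseteq> {a..b}"
      by (rule option_set_subset[OF Ri i])
    show "{a..b} \<subseteq> option_set a b n rule i Ri"
      using rest_value_in_option_set[OF _ Ri i] unanimous by (metis subsetI)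
  qed
qed

lemma dictatorial_if_reversed_phantoms:
  assumes i: "i \<in> {1..n}" and "c i = b" "d i = a"
  shows "dictatorial a b n rule"
  unfolding dictatorial_def
proof (intro bexI[OF _ i] allI impI)
  fix R assume R: "is_profile a b n R"
  then have Ri: "in_U a b (R i)"
    using i unfolding is_profile_def by blast
  have "top a b (R i) \<in> {a..b}"
    using top_in_U[OF Ri] .
  then have dictator: "rest_value (c i) (d i) (top a b (R i)) y = top a b (R i)" for y
    using assms by (auto simp: rest_value_def)
  have "rule R \<in> option_set a b n rule i (R i)"
    using outcome_in_option_set[OF R, of rule i "R i"] by simp
  then show "rule R = top a b (R i)"
    using option_set_subset_rest_values[OF Ri i] unfolding dictator by auto
qed

lemma obvious_manipulation_against_valley:
  assumes i: "i \<in> {1..n}" and lr: "0 < l" "0 < r" and m: "m \<in> {a..b}"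
    and Ri: "in_U a b (valley_pref a b l r m)" and y: "y \<in> {a..b}" "y \<noteq> m"
    and truthful: "rest_value (c i) (d i) (top a b (valley_pref a b l r m)) m = m"
    and misreport: "rest_value (c i) (d i) y m = y"
    and worst: "\<And>z. z \<in> {rest_value (c i) (d i) y a .. rest_value (c i) (d i) y b} \<Longrightarrow> z \<in> {a..b} \<Longrightarrow>
      valley_pref a b l r m z y"
  shows "obvious_manipulation a b n rule i (valley_pref a b l r m) (single_peaked_pref a b y)"
proof -
  let ?Ri = "valley_pref a b l r m" and ?Ri' = "single_peaked_pref a b y"
  let ?R = "\<lambda>j::nat. single_peaked_pref a b m"
  have Ri': "in_U a b ?Ri'" "top a b ?Ri' = y"
    using single_peaked_pref_in_U[OF y(1)] by auto
  have R: "is_profile a b n ?R"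
    using is_profile_single_peaked[OF m] .
  have truthful_outcome: "rule (?R(i := ?Ri)) = m"
    using rule_against_unanimous[OF m Ri i] truthful by simp
  have misreport_outcome: "rule (?R(i := ?Ri')) = y"
    using rule_against_unanimous[OF m Ri'(1) i] misreport Ri'(2) by simp
  have "m \<in> option_set a b n rule i ?Ri"
    using outcome_in_option_set[OF R, of rule i ?Ri] truthful_outcome by simp
  then have "is_worst_in ?Ri (option_set a b n rule i ?Ri) (rule (?R(i := ?Ri)))"
    unfolding truthful_outcome
    by (rule valley_pref_worst_in[OF lr _ option_set_subset[OF Ri i]])
  moreover have "is_worst_in ?Ri (option_set a b n rule i ?Ri') (rule (?R(i := ?Ri')))"
    unfolding is_worst_in_def
  proof
    show "rule (?R(i := ?Ri')) \<in> option_set a b n rule i ?Ri'"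
      by (rule outcome_in_option_set[OF R])
    show "\<forall>z\<in>option_set a b n rule i ?Ri'. ?Ri z (rule (?R(i := ?Ri')))"
      unfolding misreport_outcome
      using worst option_set_subset_rest_values[OF Ri'(1) i] option_set_subset[OF Ri'(1) i]
      unfolding Ri'(2) by blast
  qed
  moreover have "strict ?Ri (rule (?R(i := ?Ri'))) (rule (?R(i := ?Ri)))"
    unfolding truthful_outcome misreport_outcome by (rule valley_pref_bottom(2)[OF lr y(1) m y(2)])
  ultimately show ?thesis
    by (rule obvious_manipulation_by_worst_outcomes[OF R])
qed

lemma obvious_manipulation_if_phantoms_above_bottom:
  assumes i: "i \<in> {1..n}" and "a < c i" "a < d i"
  shows "\<exists>Ri Ri'. in_U a b Ri \<and> in_U a b Ri' \<and> obvious_manipulation a b n rule i Ri Ri'"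
proof -
  define m where "m = (a + min (c i) (d i)) / 2"
  have m: "a < m" "m < c i" "m < d i" "m \<in> {a..b}" and c: "c i \<in> {a..b}"
    using assms phantoms_range[OF i] unfolding m_def by auto
  define Ri where "Ri = valley_pref a b (b - a) (m - a) m"
  have "valley (b - a) (m - a) m b < valley (b - a) (m - a) m a"
    using m by (simp add: valley_left valley_right mult.commute[of "m - a"])
  then have "valley (b - a) (m - a) m s < valley (b - a) (m - a) m a" if "s \<in> {a, b}" "s \<noteq> a" for s
    using that by auto
  then have Ri: "in_U a b Ri" "top a b Ri = a"
    unfolding Ri_def using m a_less_b valley_pref_in_U[of a b "b - a" "m - a" a m] by auto
  have truthful: "rest_value (c i) (d i) (top a b Ri) m = m"
    using m unfolding Ri(2) rest_value_def by auto
  have misreport: "rest_value (c i) (d i) (c i) m = c i"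
    using m unfolding rest_value_def by auto
  have worst: "Ri z (c i)"
    if "z \<in> {rest_value (c i) (d i) (c i) a .. rest_value (c i) (d i) (c i) b}" "z \<in> {a..b}" for z
  proof -
    have "rest_value (c i) (d i) (c i) a = c i"
      using assms unfolding rest_value_def by auto
    then have "c i \<le> z"
      using that(1) by simp
    then show ?thesis
      unfolding Ri_def using m c that(2) by (intro valley_pref_mono) auto
  qed
  have "obvious_manipulation a b n rule i Ri (single_peaked_pref a b (c i))"
    using obvious_manipulation_against_valley[OF i _ _ m(4) Ri(1)[unfolded Ri_def] c _
        truthful[unfolded Ri_def] misreport worst[unfolded Ri_def]] m
    unfolding Ri_def by auto
  then show ?thesis
    using Ri(1) single_peaked_pref_in_U(1)[OF c] by blast
qed

lemma obvious_manipulation_if_phantoms_below_top: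
  assumes i: "i \<in> {1..n}" and "c i < b" "d i < b"
  shows "\<exists>Ri Ri'. in_U a b Ri \<and> in_U a b Ri' \<and> obvious_manipulation a b n rule i Ri Ri'"
proof -
  define m where "m = (b + max (c i) (d i)) / 2"
  have m: "m < b" "c i < m" "d i < m" "m \<in> {a..b}" and d: "d i \<in> {a..b}"
    using assms phantoms_range[OF i] unfolding m_def by auto
  define Ri where "Ri = valley_pref a b (b - m) (b - a) m"
  have "valley (b - m) (b - a) m a < valley (b - m) (b - a) m b"
    using m by (simp add: valley_left valley_right mult.commute[of "b - a"])
  then have "valley (b - m) (b - a) m s < valley (b - m) (b - a) m b" if "s \<in> {a, b}" "s \<noteq> b" for s
    using that by auto
  then have Ri: "in_U a b Ri" "top a b Ri = b"
    unfolding Ri_def using m a_less_b valley_pref_in_U[of a b "b - m" "b - a" b m] by auto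
  have truthful: "rest_value (c i) (d i) (top a b Ri) m = m"
    using m unfolding Ri(2) rest_value_def by auto
  have misreport: "rest_value (c i) (d i) (d i) m = d i"
    using m unfolding rest_value_def by auto
  have worst: "Ri z (d i)"
    if "z \<in> {rest_value (c i) (d i) (d i) a .. rest_value (c i) (d i) (d i) b}" "z \<in> {a..b}" for z
  proof -
    have "rest_value (c i) (d i) (d i) b = d i"
      using assms unfolding rest_value_def by auto
    then have "z \<le> d i"
      using that(1) by simp
    then show ?thesis
      unfolding Ri_def using m d that(2) by (intro valley_pref_mono) auto
  qed
  have "obvious_manipulation a b n rule i Ri (single_peaked_pref a b (d i))"
    using obvious_manipulation_against_valley[OF i _ _ m(4) Ri(1)[unfolded Ri_def] d _
        truthful[unfolded Ri_def] misreport worst[unfolded Ri_def]] m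
    unfolding Ri_def by auto
  then show ?thesis
    using Ri(1) single_peaked_pref_in_U(1)[OF d] by blast
qed

lemma NOM_iff_extreme_phantoms:
  assumes "\<forall>i\<in>{1..n}. \<not> (c i = b \<and> d i = a)"
  shows "NOM a b n rule \<longleftrightarrow> (\<forall>i\<in>{1..n}. c i = a \<and> d i = b)"
proof
  assume nom: "NOM a b n rule"
  show "\<forall>i\<in>{1..n}. c i = a \<and> d i = b"
  proof (rule ballI, rule ccontr)
    fix i assume i: "i \<in> {1..n}" and "\<not> (c i = a \<and> d i = b)"
    then have "a < c i \<and> a < d i \<or> c i < b \<and> d i < b"
      using assms phantoms_range[OF i] a_less_b by force
    then show False
      using nom i obvious_manipulation_if_phantoms_above_bottom
        obvious_manipulation_if_phantoms_below_top
      unfolding NOM_def by blast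
  qed
qed (rule NOM_if_extreme_phantoms)

end

section \<open>Generalized median voter schemes\<close>

lemma eq_if_le_iff: "(\<And>v. x \<le> v \<longleftrightarrow> y \<le> v) \<Longrightarrow> x = (y :: 'a :: order)"
  by (metis order.antisym order.refl)

definition gmv :: "nat \<Rightarrow> (nat set \<Rightarrow> real) \<Rightarrow> (nat \<Rightarrow> real) \<Rightarrow> real" where
  "gmv n p t = Min {Max (insert (p S) (t ` S)) | S. S \<subseteq> {1..n}}"

lemma monotone_familyD:
  assumes "monotone_family a b n p"
  shows "\<And>S. S \<subseteq> {1..n} \<Longrightarrow> p S \<in> {a..b}" and "p {1..n} = a" and "p {} = b"
    and "\<And>Q T. Q \<subseteq> {1..n} \<Longrightarrow> T \<subseteq> Q \<Longrightarrow> p Q \<le> p T"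
  using assms unfolding monotone_family_def by blast+

lemma gmv_le_iff:
  assumes "monotone_family a b n p"
  shows "gmv n p t \<le> v \<longleftrightarrow> p {j \<in> {1..n}. t j \<le> v} \<le> v"
proof -
  let ?Sv = "{j \<in> {1..n}. t j \<le> v}"
  have "{Max (insert (p S) (t ` S)) | S. S \<subseteq> {1..n}} = (\<lambda>S. Max (insert (p S) (t ` S))) ` Pow {1..n}"
    by auto
  then have fin: "finite {Max (insert (p S) (t ` S)) | S. S \<subseteq> {1..n}}"
    and ne: "{Max (insert (p S) (t ` S)) | S. S \<subseteq> {1..n}} \<noteq> {}"
    by auto
  have coalition: "Max (insert (p S) (t ` S)) \<le> v \<longleftrightarrow> p S \<le> v \<and> S \<subseteq> ?Sv"
    if "S \<subseteq> {1..n}" for S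
  proof -
    have "finite S"
      using that by (rule finite_subset) simp
    then show ?thesis
      using that by auto
  qed
  have "gmv n p t \<le> v \<longleftrightarrow> (\<exists>S\<subseteq>{1..n}. Max (insert (p S) (t ` S)) \<le> v)"
    unfolding gmv_def Min_le_iff[OF fin ne] by auto
  also have "\<dots> \<longleftrightarrow> (\<exists>S\<subseteq>{1..n}. p S \<le> v \<and> S \<subseteq> ?Sv)"
    using coalition by meson
  also have "\<dots> \<longleftrightarrow> p ?Sv \<le> v"
  proof
    assume "\<exists>S\<subseteq>{1..n}. p S \<le> v \<and> S \<subseteq> ?Sv"
    then obtain S where "p S \<le> v" "S \<subseteq> ?Sv"
      by blast
    moreover have "p ?Sv \<le> p S"
      by (rule monotone_familyD(4)[OF assms]) (use \<open>S \<subseteq> ?Sv\<close> in auto)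
    ultimately show "p ?Sv \<le> v"
      by linarith
  qed (intro exI[of _ ?Sv], auto)
  finally show ?thesis .
qed

lemma gmv_mono:
  assumes "monotone_family a b n p" and "\<And>j. j \<in> {1..n} \<Longrightarrow> s j \<le> t j"
  shows "gmv n p s \<le> gmv n p t"
proof -
  let ?v = "gmv n p t"
  have "{j \<in> {1..n}. t j \<le> ?v} \<subseteq> {j \<in> {1..n}. s j \<le> ?v}"
    using assms(2) by (auto dest: order_trans)
  then have "p {j \<in> {1..n}. s j \<le> ?v} \<le> p {j \<in> {1..n}. t j \<le> ?v}"
    by (intro monotone_familyD(4)[OF assms(1)]) auto
  also have "\<dots> \<le> ?v"
    using gmv_le_iff[OF assms(1)] by blast
  finally show ?thesis
    using gmv_le_iff[OF assms(1)] by blast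
qed

lemma gmv_against_unanimous:
  assumes p: "monotone_family a b n p" and i: "i \<in> {1..n}" and x: "x \<in> {a..b}" and y: "y \<in> {a..b}"
  shows "gmv n p ((\<lambda>j. y)(i := x)) = rest_value (p ({1..n} - {i})) (p {i}) x y"
proof (rule eq_if_le_iff)
  fix v
  let ?Sv = "{j \<in> {1..n}. ((\<lambda>j. y)(i := x)) j \<le> v}"
  have pN: "p {1..n} = a" and p0: "p {} = b"
    using monotone_familyD(2,3)[OF p] .
  consider "x \<le> v" "y \<le> v" | "x \<le> v" "v < y" | "v < x" "y \<le> v" | "v < x" "v < y"
    by linarith
  then have Sv: "p ?Sv \<le> v \<longleftrightarrow> rest_value (p ({1..n} - {i})) (p {i}) x y \<le> v"
  proof cases
    case 1
    then have "?Sv = {1..n}" by auto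
    then show ?thesis using 1 x pN by (simp add: rest_value_def)
  next
    case 2
    then have "?Sv = {i}" using i by auto
    then show ?thesis using 2 by (simp add: rest_value_def min_le_iff_disj; linarith)
  next
    case 3
    then have "?Sv = {1..n} - {i}" by auto
    then show ?thesis using 3 by (simp add: rest_value_def min_le_iff_disj; linarith)
  next
    case 4
    then have "?Sv = {}" by auto
    then show ?thesis using 4 x p0 by (simp add: rest_value_def)
  qed
  show "gmv n p ((\<lambda>j. y)(i := x)) \<le> v \<longleftrightarrow> rest_value (p ({1..n} - {i})) (p {i}) x y \<le> v"
    using gmv_le_iff[OF p] Sv by (rule trans)
qed

lemma phantom_rule_gmv:
  assumes "a < b" and p: "monotone_family a b n p"
  shows "phantom_rule a b n (gmv n p) (\<lambda>i. p ({1..n} - {i})) (\<lambda>i. p {i})"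
proof
  show "a < b" by fact
  show "gmv n p s \<le> gmv n p t" if "\<And>j. j \<in> {1..n} \<Longrightarrow> a \<le> s j \<and> s j \<le> t j \<and> t j \<le> b" for s t
    using that by (intro gmv_mono[OF p]) blast
  show "gmv n p ((\<lambda>j. y)(i := x)) = rest_value (p ({1..n} - {i})) (p {i}) x y"
    if "i \<in> {1..n}" "x \<in> {a..b}" "y \<in> {a..b}" for i x y
    using gmv_against_unanimous[OF p that] .
  show "p ({1..n} - {i}) \<in> {a..b} \<and> p {i} \<in> {a..b}" if "i \<in> {1..n}" for i
    using that monotone_familyD(1)[OF p] by auto
qed

section \<open>Median voter schemes\<close>

definition median_rule :: "nat \<Rightarrow> (nat \<Rightarrow> real) \<Rightarrow> (nat \<Rightarrow> real) \<Rightarrow> real" where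
  "median_rule n \<alpha> t = med (map t [1..<n+1] @ map \<alpha> [1..<n])"

(* p_S = alpha_{n-|S|}, with the conventions alpha_0 = a and alpha_n = b *)
definition median_phantoms :: "real \<Rightarrow> real \<Rightarrow> nat \<Rightarrow> (nat \<Rightarrow> real) \<Rightarrow> nat set \<Rightarrow> real" where
  "median_phantoms a b n \<alpha> S = (if S = {} then b else if n \<le> card S then a else \<alpha> (n - card S))"

lemma sorted_nth_le_iff:
  assumes "sorted xs" and "k < length xs"
  shows "xs ! k \<le> v \<longleftrightarrow> k < length (filter (\<lambda>x. x \<le> v) xs)"
  using assms
proof (induction xs arbitrary: k)
  case (Cons x xs)
  show ?case
  proof (cases "x \<le> v")
    case True
    then show ?thesis using Cons by (cases k) auto
  next
    case False
    then have above: "\<forall>y\<in>set xs. v < y"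
      using Cons.prems(1) by force
    then have "filter (\<lambda>x. x \<le> v) xs = []"
      by (auto simp: filter_empty_conv)
    then show ?thesis
      using False above Cons.prems(2) by (cases k) (auto simp: not_le)
  qed
qed simp

lemma med_le_iff:
  "xs \<noteq> [] \<Longrightarrow> med xs \<le> v \<longleftrightarrow> length xs div 2 < length (filter (\<lambda>x. x \<le> v) xs)"
  unfolding med_def using sorted_nth_le_iff[of "sort xs" "length xs div 2" v]
  by (simp add: filter_sort)

lemma length_filter_map_upt:
  "length (filter P (map t [m..<k])) = card {j \<in> {m..<k}. P (t j)}"
proof -
  have "length (filter P (map t [m..<k])) = length (filter (P \<circ> t) [m..<k])"
    by (simp add: filter_map)
  also have "\<dots> = card ({j. (P \<circ> t) j} \<inter> set [m..<k])"
    by (rule distinct_length_filter) simp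
  also have "{j. (P \<circ> t) j} \<inter> set [m..<k] = {j \<in> {m..<k}. P (t j)}"
    by auto
  finally show ?thesis .
qed

lemma ballot_le_iff:
  assumes "ballots_ok a b n \<alpha>" and k: "k \<in> {1..<n}"
  shows "\<alpha> k \<le> v \<longleftrightarrow> k \<le> card {l \<in> {1..<n}. \<alpha> l \<le> v}"
proof -
  have "sorted_wrt (<) [1..<n]"
    by simp
  then have "sorted_wrt (\<lambda>x y. \<alpha> x \<le> \<alpha> y) [1..<n]"
    by (rule sorted_wrt_mono_rel[rotated]) (use assms(1) in \<open>auto simp: ballots_ok_def\<close>)
  then have "sorted (map \<alpha> [1..<n])"
    by (simp add: sorted_map)
  moreover have "map \<alpha> [1..<n] ! (k - 1) = \<alpha> k" "k - 1 < length (map \<alpha> [1..<n])"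
    using k by auto
  ultimately have "\<alpha> k \<le> v \<longleftrightarrow> k - 1 < length (filter (\<lambda>x. x \<le> v) (map \<alpha> [1..<n]))"
    using sorted_nth_le_iff by metis
  then show ?thesis
    unfolding length_filter_map_upt using k by auto
qed

lemma median_rule_le_iff_count:
  assumes "n \<ge> 1"
  shows "median_rule n \<alpha> t \<le> v \<longleftrightarrow>
    n \<le> card {j \<in> {1..n}. t j \<le> v} + card {l \<in> {1..<n}. \<alpha> l \<le> v}"
proof -
  let ?L = "map t [1..<n + 1] @ map \<alpha> [1..<n]"
  have "{1..<n + 1} = {1..n}"
    by auto
  then have count: "length (filter (\<lambda>x. x \<le> v) ?L) =
      card {j \<in> {1..n}. t j \<le> v} + card {l \<in> {1..<n}. \<alpha> l \<le> v}"
    by (simp only: filter_append length_append length_filter_map_upt)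
  have half: "length ?L div 2 = n - 1" and "?L \<noteq> []"
    using assms by auto
  then have "median_rule n \<alpha> t \<le> v \<longleftrightarrow> length ?L div 2 < length (filter (\<lambda>x. x \<le> v) ?L)"
    unfolding median_rule_def by (intro med_le_iff)
  then show ?thesis
    unfolding half count using assms by linarith
qed

lemma median_rule_le_iff:
  assumes "n \<ge> 1" and \<alpha>: "ballots_ok a b n \<alpha>" and t: "\<And>j. j \<in> {1..n} \<Longrightarrow> t j \<in> {a..b}"
  shows "median_rule n \<alpha> t \<le> v \<longleftrightarrow> median_phantoms a b n \<alpha> {j \<in> {1..n}. t j \<le> v} \<le> v"
proof -
  define S where "S = {j \<in> {1..n}. t j \<le> v}"
  define B where "B = card {l \<in> {1..<n}. \<alpha> l \<le> v}"
  have "B \<le> card {1..<n}" "card S \<le> card {1..n}"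
    unfolding B_def S_def by (rule card_mono; auto)+
  then have B: "B < n" and card_S: "card S \<le> n"
    using assms(1) by simp_all
  have "median_rule n \<alpha> t \<le> v \<longleftrightarrow> n \<le> card S + B"
    unfolding S_def B_def by (rule median_rule_le_iff_count[OF assms(1)])
  also have "\<dots> \<longleftrightarrow> median_phantoms a b n \<alpha> S \<le> v"
  proof (cases "S = {}")
    case True
    have "\<not> b \<le> v"
    proof
      assume "b \<le> v"
      then have "n \<in> S"
        unfolding S_def using t[of n] assms(1) by auto
      then show False
        using True by simp
    qed
    then show ?thesis
      using True B unfolding median_phantoms_def by simp
  next
    case False
    then obtain j where j: "j \<in> {1..n}" "t j \<le> v"
      unfolding S_def by blast
    have "0 < card S"
      using False unfolding S_def by (simp add: card_gt_0_iff)
    show ?thesis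
    proof (cases "n \<le> card S")
      case True
      have "a \<le> v"
        using j t[of j] by auto
      then show ?thesis
        using True False card_S \<open>0 < card S\<close> unfolding median_phantoms_def by simp
    next
      case False
      have "\<alpha> (n - card S) \<le> v \<longleftrightarrow> n - card S \<le> B"
        unfolding B_def using \<open>0 < card S\<close> False by (intro ballot_le_iff[OF \<alpha>]) auto
      then show ?thesis
        using \<open>S \<noteq> {}\<close> False unfolding median_phantoms_def by auto
    qed
  qed
  finally show ?thesis
    unfolding S_def .
qed

lemma monotone_family_median_phantoms:
  assumes "a \<le> b" "n \<ge> 1" and \<alpha>: "ballots_ok a b n \<alpha>"
  shows "monotone_family a b n (median_phantoms a b n \<alpha>)"
proof -
  have range: "\<alpha> k \<in> {a..b}" if "k \<in> {1..<n}" for k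
    using \<alpha> that unfolding ballots_ok_def by blast
  have mono: "\<alpha> k \<le> \<alpha> l" if "k \<in> {1..<n}" "l \<in> {1..<n}" "k \<le> l" for k l
    using \<alpha> that unfolding ballots_ok_def by blast
  have card_pos: "0 < card S" if "S \<subseteq> {1..n}" "S \<noteq> {}" for S
    using that by (simp add: card_gt_0_iff finite_subset)
  have in_range: "median_phantoms a b n \<alpha> S \<in> {a..b}" if "S \<subseteq> {1..n}" for S
    using assms(1) range[of "n - card S"] card_pos[OF that] unfolding median_phantoms_def by auto
  have "median_phantoms a b n \<alpha> Q \<le> median_phantoms a b n \<alpha> T"
    if Q: "Q \<subseteq> {1..n}" and T: "T \<subseteq> Q" for Q T
  proof -
    have "card T \<le> card Q"
      using Q T by (simp add: card_mono finite_subset)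
    consider "T = {}" | "T \<noteq> {}" "n \<le> card Q" | "T \<noteq> {}" "card Q < n"
      by linarith
    then show ?thesis
    proof cases
      case 1
      then show ?thesis
        using in_range[OF Q] unfolding median_phantoms_def by simp
    next
      case 2
      have "T \<subseteq> {1..n}"
        using Q T by blast
      then have "a \<le> median_phantoms a b n \<alpha> T"
        using in_range by auto
      moreover have "median_phantoms a b n \<alpha> Q = a"
        using 2 T unfolding median_phantoms_def by auto
      ultimately show ?thesis
        by simp
    next
      case 3
      then have "0 < card T"
        using card_pos[of T] Q T by blast
      then show ?thesis
        using 3 T \<open>card T \<le> card Q\<close> mono[of "n - card Q" "n - card T"]
        unfolding median_phantoms_def by auto
    qed
  qed
  then show ?thesis
    unfolding monotone_family_def using in_range assms(2) by (simp add: median_phantoms_def)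
qed

lemma median_phantoms_at_agent:
  assumes "n \<ge> 2" "i \<in> {1..n}"
  shows "median_phantoms a b n \<alpha> ({1..n} - {i}) = \<alpha> 1" and "median_phantoms a b n \<alpha> {i} = \<alpha> (n - 1)"
proof -
  have "1 \<in> {1..n} - {i} \<or> 2 \<in> {1..n} - {i}"
    using assms by (cases "i = 1") auto
  then have "{1..n} - {i} \<noteq> {}"
    by blast
  moreover have "card ({1..n} - {i}) = n - 1"
    using assms(2) by simp
  ultimately show "median_phantoms a b n \<alpha> ({1..n} - {i}) = \<alpha> 1" "median_phantoms a b n \<alpha> {i} = \<alpha> (n - 1)"
    using assms(1) unfolding median_phantoms_def by auto
qed

lemma median_rule_eq_gmv:
  assumes "a \<le> b" "n \<ge> 1" "ballots_ok a b n \<alpha>" "\<And>j. j \<in> {1..n} \<Longrightarrow> t j \<in> {a..b}"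
  shows "median_rule n \<alpha> t = gmv n (median_phantoms a b n \<alpha>) t"
proof (rule eq_if_le_iff)
  fix v
  have "median_rule n \<alpha> t \<le> v \<longleftrightarrow> median_phantoms a b n \<alpha> {j \<in> {1..n}. t j \<le> v} \<le> v"
    by (rule median_rule_le_iff[OF assms(2-4)])
  also have "\<dots> \<longleftrightarrow> gmv n (median_phantoms a b n \<alpha>) t \<le> v"
    by (rule gmv_le_iff[OF monotone_family_median_phantoms[OF assms(1-3)], symmetric])
  finally show "median_rule n \<alpha> t \<le> v \<longleftrightarrow> gmv n (median_phantoms a b n \<alpha>) t \<le> v" .
qed

lemma phantom_rule_median:
  assumes ab: "a < b" and n: "n \<ge> 2" and \<alpha>: "ballots_ok a b n \<alpha>"
  shows "phantom_rule a b n (median_rule n \<alpha>) (\<lambda>_. \<alpha> 1) (\<lambda>_. \<alpha> (n - 1))"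
proof -
  have "monotone_family a b n (median_phantoms a b n \<alpha>)"
    using ab n by (intro monotone_family_median_phantoms[OF _ _ \<alpha>]) auto
  then interpret G: phantom_rule a b n "gmv n (median_phantoms a b n \<alpha>)"
    "\<lambda>i. median_phantoms a b n \<alpha> ({1..n} - {i})" "\<lambda>i. median_phantoms a b n \<alpha> {i}"
    by (rule phantom_rule_gmv[OF ab])
  have eq: "median_rule n \<alpha> t = gmv n (median_phantoms a b n \<alpha>) t"
    if "\<And>j. j \<in> {1..n} \<Longrightarrow> t j \<in> {a..b}" for t
    using ab n by (intro median_rule_eq_gmv[OF _ _ \<alpha> that]) auto
  show ?thesis
  proof
    show "a < b" by fact
    show "median_rule n \<alpha> s \<le> median_rule n \<alpha> t"
      if bounds: "\<And>j. j \<in> {1..n} \<Longrightarrow> a \<le> s j \<and> s j \<le> t j \<and> t j \<le> b" for s t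
    proof -
      have "median_rule n \<alpha> s = gmv n (median_phantoms a b n \<alpha>) s"
        by (rule eq) (use bounds in force)
      moreover have "median_rule n \<alpha> t = gmv n (median_phantoms a b n \<alpha>) t"
        by (rule eq) (use bounds in force)
      ultimately show ?thesis
        using G.F_mono[OF bounds] by simp
    qed
    show "median_rule n \<alpha> ((\<lambda>j. y)(i := x)) = rest_value (\<alpha> 1) (\<alpha> (n - 1)) x y"
      if i: "i \<in> {1..n}" and x: "x \<in> {a..b}" and y: "y \<in> {a..b}" for i x y
    proof -
      have "median_rule n \<alpha> ((\<lambda>j. y)(i := x)) = gmv n (median_phantoms a b n \<alpha>) ((\<lambda>j. y)(i := x))"
        by (rule eq) (use x y in auto)
      then show ?thesis
        using G.F_against_unanimous[OF i x y] median_phantoms_at_agent[OF n i] by simp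
    qed
    show "\<alpha> 1 \<in> {a..b} \<and> \<alpha> (n - 1) \<in> {a..b}"
      using \<alpha> n unfolding ballots_ok_def by auto
  qed
qed

theorem theorem5:
  fixes a b :: real and n :: nat
  assumes "a < b" and "n \<ge> 2"
  shows "(\<forall>\<alpha>. ballots_ok a b n \<alpha> \<longrightarrow>
            (NOM a b n (mvs a b n \<alpha>) \<longleftrightarrow> \<alpha> 1 = a \<and> \<alpha> (n - 1) = b))
       \<and> (\<forall>p. monotone_family a b n p \<and> \<not> dictatorial a b n (gmvs a b n p) \<longrightarrow>
            (NOM a b n (gmvs a b n p) \<longleftrightarrow>
               (\<forall>i\<in>{1..n}. p ({1..n} - {i}) = a \<and> p {i} = b)))"
proof (intro conjI allI impI)
  fix \<alpha> assume \<alpha>: "ballots_ok a b n \<alpha>"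
  interpret M: phantom_rule a b n "median_rule n \<alpha>" "\<lambda>_. \<alpha> 1" "\<lambda>_. \<alpha> (n - 1)"
    using phantom_rule_median[OF assms \<alpha>] .
  have mvs: "mvs a b n \<alpha> = M.rule"
    by (simp add: fun_eq_iff mvs_def median_rule_def)
  have "\<alpha> 1 \<le> \<alpha> (n - 1)"
    using \<alpha> assms(2) unfolding ballots_ok_def by auto
  then have "\<forall>i\<in>{1..n}. \<not> (\<alpha> 1 = b \<and> \<alpha> (n - 1) = a)"
    using assms(1) by auto
  then have "NOM a b n (mvs a b n \<alpha>) \<longleftrightarrow> (\<forall>i\<in>{1..n}. \<alpha> 1 = a \<and> \<alpha> (n - 1) = b)"
    unfolding mvs by (rule M.NOM_iff_extreme_phantoms)
  moreover have "1 \<in> {1..n}"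
    using assms(2) by simp
  ultimately show "NOM a b n (mvs a b n \<alpha>) \<longleftrightarrow> \<alpha> 1 = a \<and> \<alpha> (n - 1) = b"
    by blast
next
  fix p assume p: "monotone_family a b n p \<and> \<not> dictatorial a b n (gmvs a b n p)"
  interpret G: phantom_rule a b n "gmv n p" "\<lambda>i. p ({1..n} - {i})" "\<lambda>i. p {i}"
    by (rule phantom_rule_gmv[OF assms(1)]) (use p in blast)
  have gmvs: "gmvs a b n p = G.rule"
    by (simp add: fun_eq_iff gmvs_def gmv_def)
  then have "\<not> dictatorial a b n G.rule"
    using p by simp
  then have "\<forall>i\<in>{1..n}. \<not> (p ({1..n} - {i}) = b \<and> p {i} = a)"
    using G.dictatorial_if_reversed_phantoms by blast
  then show "NOM a b n (gmvs a b n p) \<longleftrightarrow> (\<forall>i\<in>{1..n}. p ({1..n} - {i}) = a \<and> p {i} = b)"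
    unfolding gmvs by (rule G.NOM_iff_extreme_phantoms)
qed

end
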